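(* Let $t$ be an indeterminate and define polynomials $P_n,Y_n\in\mathbb{Z}[t]$ by $P_0=Y_0=1$ and, for $n\ge1$, $$P_n=(2t+1)P_{n-1}+2t(t+1)Y_{n-1},\qquad Y_n=2P_{n-1}+(2t+1)Y_{n-1}.$$ Put $y_n=\tfrac12(Y_n-1)$ and $$q_n=\frac{(P_n-Y_n)\big((2t^2+4t+1)Y_n+(2t+3)P_n\big)}{4(t^2+t-1)}.$$ Then for every $n\ge0$: $y_n\in\mathbb{Z}[t]$, $q_n\in\mathbb{Z}[t]$, $t(t+1)\,y_n(y_n+1)=p_n(p_n+1)$ with $p_n=\tfrac12(P_n-1)\in\mathbb{Z}[t]$, and $$y_n(y_n+1)\,y_{n+1}(y_{n+1}+1)=q_n(q_n+1).$$ *)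

theory Defs
  imports "HOL-Computational_Algebra.Polynomial"
begin

definition tt :: "int poly" where "tt = [:0, 1:]"

fun PY :: "nat \<Rightarrow> int poly \<times> int poly" where
  "PY 0 = (1, 1)"
| "PY (Suc n) = (let (P, Y) = PY n in
      ((2*tt + 1) * P + 2*tt*(tt + 1) * Y, 2 * P + (2*tt + 1) * Y))"

definition Pn :: "nat \<Rightarrow> int poly" where "Pn n = fst (PY n)"
definition Yn :: "nat \<Rightarrow> int poly" where "Yn n = snd (PY n)"

end

theory Submission
  imports Defs
begin

text \<open>
  Writing \<open>P = 2p + 1\<close>, \<open>Y = 2y + 1\<close>, the relation \<open>t(t+1) y(y+1) = p(p+1)\<close> is the
  Pell-type equation \<open>P\<^sup>2 - t(t+1) Y\<^sup>2 = 1 - t(t+1)\<close>, and the recursion multiplies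
  \<open>P + Y\<surd>(t(t+1))\<close> by the unit \<open>2t + 1 + 2\<surd>(t(t+1))\<close> of norm 1, so the relation is
  preserved. The product identity for consecutive \<open>y\<close>'s and the closed form of \<open>q\<close> are
  then polynomial identities modulo this relation.
\<close>

definition p_step :: "'a::idom \<Rightarrow> 'a \<Rightarrow> 'a \<Rightarrow> 'a" where
  "p_step t p y = (2*t + 1)*p + 2*t*(t + 1)*y + t^2 + 2*t"

definition y_step :: "'a::idom \<Rightarrow> 'a \<Rightarrow> 'a \<Rightarrow> 'a" where
  "y_step t p y = 2*p + (2*t + 1)*y + t + 1"

definition q_of :: "'a::idom \<Rightarrow> 'a \<Rightarrow> 'a \<Rightarrow> 'a" where
  "q_of t p y = (2*t + 1)*(y*(y + 1)) + 2*p*y + p + y"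

lemma pronic_relation_step:
  fixes t p y :: "'a::idom"
  assumes "t*(t + 1)*(y*(y + 1)) = p*(p + 1)"
  shows "t*(t + 1)*(y_step t p y*(y_step t p y + 1)) = p_step t p y*(p_step t p y + 1)"
  using assms unfolding p_step_def y_step_def by algebra

lemma pronic_product_y_step:
  fixes t p y :: "'a::idom"
  assumes "t*(t + 1)*(y*(y + 1)) = p*(p + 1)"
  shows "y*(y + 1)*(y_step t p y*(y_step t p y + 1)) = q_of t p y*(q_of t p y + 1)"
  using assms unfolding y_step_def q_of_def by algebra

lemma q_of_closed_form:
  fixes t p y :: "'a::idom"
  assumes "t*(t + 1)*(y*(y + 1)) = p*(p + 1)"
  shows "4*(t^2 + t - 1)*q_of t p y =
           ((2*p + 1) - (2*y + 1))*((2*t^2 + 4*t + 1)*(2*y + 1) + (2*t + 3)*(2*p + 1))"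
  using assms unfolding q_of_def by algebra

lemma Pn_Suc: "Pn (Suc n) = (2*tt + 1)*Pn n + 2*tt*(tt + 1)*Yn n"
  and Yn_Suc: "Yn (Suc n) = 2*Pn n + (2*tt + 1)*Yn n"
  by (simp_all add: Pn_def Yn_def split: prod.splits)

lemma odd_step:
  fixes t p y :: "'a::idom"
  shows "(2*t + 1)*(2*p + 1) + 2*t*(t + 1)*(2*y + 1) = 2*p_step t p y + 1"
    and "2*(2*p + 1) + (2*t + 1)*(2*y + 1) = 2*y_step t p y + 1"
  unfolding p_step_def y_step_def by (simp_all add: algebra_simps power2_eq_square)

lemma Pn_Yn_halves:
  "\<exists>p y. Pn n = 2*p + 1 \<and> Yn n = 2*y + 1 \<and> tt*(tt + 1)*(y*(y + 1)) = p*(p + 1)"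
proof (induction n)
  case 0
  have "Pn 0 = 2*0 + 1" "Yn 0 = 2*0 + 1" by (simp_all add: Pn_def Yn_def)
  then show ?case by fastforce
next
  case (Suc n)
  then obtain p y where "Pn n = 2*p + 1" "Yn n = 2*y + 1"
    and rel: "tt*(tt + 1)*(y*(y + 1)) = p*(p + 1)" by blast
  then have "Pn (Suc n) = 2*p_step tt p y + 1" "Yn (Suc n) = 2*y_step tt p y + 1"
    by (simp_all only: Pn_Suc Yn_Suc odd_step)
  with pronic_relation_step[OF rel] show ?case by blast
qed

theorem mainTheorem6:
  fixes n :: nat
  shows "\<exists>y y' p q :: int poly.
           Yn n = 2 * y + 1 \<and>
           Yn (Suc n) = 2 * y' + 1 \<and>
           Pn n = 2 * p + 1 \<and>
           4 * (tt^2 + tt - 1) * q =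
             (Pn n - Yn n) * ((2*tt^2 + 4*tt + 1) * Yn n + (2*tt + 3) * Pn n) \<and>
           tt * (tt + 1) * (y * (y + 1)) = p * (p + 1) \<and>
           y * (y + 1) * (y' * (y' + 1)) = q * (q + 1)"
proof -
  obtain p y where P: "Pn n = 2*p + 1" and Y: "Yn n = 2*y + 1"
    and rel: "tt*(tt + 1)*(y*(y + 1)) = p*(p + 1)"
    using Pn_Yn_halves by blast
  have "Yn (Suc n) = 2*y_step tt p y + 1"
    by (simp only: Yn_Suc P Y odd_step)
  with P Y rel pronic_product_y_step[OF rel] q_of_closed_form[OF rel] show ?thesis
    by auto
qed

end
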